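(* Let $\mathbb T=\mathbb R/2\pi\mathbb Z$ with normalized Lebesgue measure $dx$, $(B_t)$ a one-dimensional Brownian motion, $(t,x)\mapsto\phi_t(x)$ smooth on $[0,1]\times\mathbb T$, $X_t$ the stochastic flow of diffeomorphisms solving the Stratonovich SDE $dX_t=\partial_x\phi_t(X_t)\circ dB_t$, $X_0(x)=x$, $\rho$ a smooth strictly positive probability density and $\rho_t$ the density of $(X_t)_\#(\rho\,dx)$. Set $\hat\rho_t=1/\big((\int_{\mathbb T}\frac{dx}{\rho_t})\rho_t\big)$, $a_t=\frac{\partial_x^2\phi_t}{\rho_t}(X_t)$, $b_t=\frac{\partial_x(\partial_x^2\phi_t\,\partial_x\phi_t)}{\rho_t}(X_t)$ and, for $f\in L^2(\rho\,dx)$, $$\Lambda(t,f)=-\Big(\int_{\mathbb T}fa_t\rho\,dx\Big)\hat\rho_t(X_t),$$ $$\Theta(t,f)=-\frac12\Big(\int_{\mathbb T}fa_t\rho\,dx\Big)(\hat\rho_t\partial_x^2\phi_t)(X_t)-\frac12\Big(\int_{\mathbb T}fb_t\rho\,dx\Big)\hat\rho_t(X_t)+\frac32\Big(\int_{\mathbb T}fa_t\rho\,dx\Big)\Big(\int_{\mathbb T}\partial_x^2\phi_t\,\hat\rho_t\,dx\Big)\hat\rho_t(X_t).$$ Then for all $t\in[0,1]$ and $f\in L^2(\rho\,dx)$, $$\|\Lambda(t,f)\|_{L^2(\rho dx)}\le\Big(\sup_{t\in[0,1]}\|\partial_x^2\phi_t\|_\infty\Big)\|f\|_{L^2(\rho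 dx)},$$ $$\|\Theta(t,f)\|_{L^2(\rho dx)}\le\Big(2\sup_{t\in[0,1]}\|\partial_x^2\phi_t\|_\infty^2+\sup_{t\in[0,1]}\|\partial_x(\partial_x^2\phi_t\,\partial_x\phi_t)\|_\infty\Big)\|f\|_{L^2(\rho dx)}.$$ *)

theory Defs
  imports "HOL-Analysis.Analysis"
begin

text \<open>The circle T = R/2piZ is modelled by 2pi-periodic functions on the real line.
  Normalized Lebesgue measure dx on T: integral over [0,2pi] divided by 2pi.\<close>

definition per :: "(real \<Rightarrow> real) \<Rightarrow> bool" where
  "per g \<longleftrightarrow> (\<forall>x. g (x + 2*pi) = g x)"

definition tint :: "(real \<Rightarrow> real) \<Rightarrow> real" where
  "tint g = integral {0..2*pi} g / (2*pi)"

definition smooth_fun :: "(real \<Rightarrow> real) \<Rightarrow> bool" where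
  "smooth_fun g \<longleftrightarrow> (\<forall>n x. ((deriv ^^ n) g) differentiable (at x))"

definition l2norm :: "(real \<Rightarrow> real) \<Rightarrow> (real \<Rightarrow> real) \<Rightarrow> real" where
  "l2norm rho f = sqrt (tint (\<lambda>x. (f x)^2 * rho x))"

definition inL2 :: "(real \<Rightarrow> real) \<Rightarrow> (real \<Rightarrow> real) \<Rightarrow> bool" where
  "inL2 rho f \<longleftrightarrow> f \<in> borel_measurable (lebesgue_on {0..2*pi})
      \<and> (\<lambda>x. (f x)^2 * rho x) integrable_on {0..2*pi}"

definition supn :: "(real \<Rightarrow> real) \<Rightarrow> real" where
  "supn g = (SUP x. \<bar>g x\<bar>)"

definition d1 :: "(real \<Rightarrow> real \<Rightarrow> real) \<Rightarrow> real \<Rightarrow> real \<Rightarrow> real" where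
  "d1 phi t = deriv (phi t)"

definition d2 :: "(real \<Rightarrow> real \<Rightarrow> real) \<Rightarrow> real \<Rightarrow> real \<Rightarrow> real" where
  "d2 phi t = deriv (deriv (phi t))"

definition rhohat :: "(real \<Rightarrow> real \<Rightarrow> real) \<Rightarrow> real \<Rightarrow> real \<Rightarrow> real" where
  "rhohat rhot t y = 1 / (tint (\<lambda>z. 1 / rhot t z) * rhot t y)"

definition acoef where
  "acoef phi X rhot t x = d2 phi t (X t x) / rhot t (X t x)"

definition bcoef where
  "bcoef phi X rhot t x =
     deriv (\<lambda>y. d2 phi t y * d1 phi t y) (X t x) / rhot t (X t x)"

definition Lam where
  "Lam phi X rho rhot t f x =
     - tint (\<lambda>y. f y * acoef phi X rhot t y * rho y) * rhohat rhot t (X t x)"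

definition Theta where
  "Theta phi X rho rhot t f x =
     - 1/2 * tint (\<lambda>y. f y * acoef phi X rhot t y * rho y)
           * (rhohat rhot t (X t x) * d2 phi t (X t x))
     - 1/2 * tint (\<lambda>y. f y * bcoef phi X rhot t y * rho y) * rhohat rhot t (X t x)
     + 3/2 * tint (\<lambda>y. f y * acoef phi X rhot t y * rho y)
           * tint (\<lambda>y. d2 phi t y * rhohat rhot t y) * rhohat rhot t (X t x)"

end

theory Submission
  imports Defs
begin

text \<open>With K = \<integral> dx / rho_t one has rho-hat_t = 1 / (K rho_t). The push-forward identity turns
  L^2(rho dx) norms of functions of X_t into integrals against rho_t dx, so rho-hat_t(X_t) has norm
  K^(-1/2) while (h / rho_t)(X_t) has norm at most K^(1/2) sup |h|. By Cauchy-Schwarz the coefficients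
  \<integral> f a_t rho dx and \<integral> f b_t rho dx are therefore at most K^(1/2) ||f|| times the relevant sup
  norms, and these powers of K cancel against the factor rho-hat_t(X_t). The remaining coefficient
  \<integral> phi_t'' rho-hat_t dx is at most sup |phi_t''| because rho-hat_t is a probability density.\<close>

section \<open>Integrals over a period\<close>

lemma integrable_on_period:
  fixes f :: "real \<Rightarrow> 'a::banach"
  shows "continuous_on UNIV f \<Longrightarrow> f integrable_on {0..2*pi}"
  by (rule integrable_continuous_interval, erule continuous_on_subset, simp)

lemma tint_mono:
  assumes "f integrable_on {0..2*pi}" "g integrable_on {0..2*pi}"
    and "\<And>x. x \<in> {0..2*pi} \<Longrightarrow> f x \<le> g x"
  shows "tint f \<le> tint g"
  unfolding tint_def using integral_le[OF assms] by (simp add: divide_right_mono)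

lemma tint_nonneg:
  assumes "\<And>x. x \<in> {0..2*pi} \<Longrightarrow> 0 \<le> f x"
  shows "0 \<le> tint f"
proof (cases "f integrable_on {0..2*pi}")
  case True
  then show ?thesis unfolding tint_def using integral_nonneg[OF True assms] by simp
qed (simp add: tint_def not_integrable_integral)

lemma tint_cmult: "tint (\<lambda>x. c * f x) = c * tint f"
  unfolding tint_def by simp

lemma tint_add:
  "f integrable_on {0..2*pi} \<Longrightarrow> g integrable_on {0..2*pi} \<Longrightarrow>
    tint (\<lambda>x. f x + g x) = tint f + tint g"
  unfolding tint_def by (simp add: integral_add add_divide_distrib)

lemma tint_const: "tint (\<lambda>x. c) = c"
  unfolding tint_def by simp

lemma l2norm_nonneg: "(\<And>x. 0 \<le> rho x) \<Longrightarrow> 0 \<le> l2norm rho f"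
  unfolding l2norm_def by (simp add: tint_nonneg)

lemma discriminant_le_if_quadratic_nonneg:
  fixes A B I :: real
  assumes A: "0 \<le> A" and quadratic: "\<And>s. 0 \<le> s^2 * A + 2 * s * I + B"
  shows "I^2 \<le> A * B"
proof (cases "A = 0")
  case True
  have "I = 0"
  proof (rule ccontr)
    assume "I \<noteq> 0"
    then have "2 * (- (B + 1) / (2 * I)) * I = - (B + 1)" by simp
    then show False using quadratic[of "- (B + 1) / (2 * I)"] True by simp
  qed
  then show ?thesis using True by simp
next
  case False
  with A have "0 < A" by simp
  have "(- I / A)^2 * A + 2 * (- I / A) * I + B = B - I^2 / A"
    using \<open>0 < A\<close> by (simp add: power2_eq_square field_simps)
  then have "I^2 / A \<le> B" using quadratic[of "- I / A"] by simp
  then show ?thesis using \<open>0 < A\<close> by (simp add: divide_le_eq mult.commute)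
qed

lemma L2_mult_continuous_integrable:
  assumes f: "inL2 rho f" and g: "continuous_on UNIV g"
    and rho: "continuous_on UNIV rho" "\<And>x. 0 \<le> rho x"
  shows "(\<lambda>x. f x * g x * rho x) integrable_on {0..2*pi}"
proof -
  have fm: "f \<in> borel_measurable (lebesgue_on {0..2*pi})"
    and fi: "(\<lambda>x. (f x)^2 * rho x) integrable_on {0..2*pi}"
    using f by (auto simp: inL2_def)
  have S: "{0..2*pi::real} \<in> sets lebesgue" by simp
  have measurable: "h \<in> borel_measurable (lebesgue_on {0..2*pi})"
    if "continuous_on UNIV h" for h :: "real \<Rightarrow> real"
    by (rule continuous_imp_measurable_on_sets_lebesgue[OF continuous_on_subset[OF that] S]) simp
  have gi: "(\<lambda>x. (g x)^2 * rho x) integrable_on {0..2*pi}"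
    by (intro integrable_on_period continuous_intros g rho(1))
  show ?thesis
  proof (rule measurable_bounded_by_integrable_imp_integrable[OF _ integrable_add[OF fi gi] _ S])
    show "(\<lambda>x. f x * g x * rho x) \<in> borel_measurable (lebesgue_on {0..2*pi})"
      by (rule borel_measurable_times[OF borel_measurable_times[OF fm measurable[OF g]]
            measurable[OF rho(1)]])
    fix x
    have "2 * (\<bar>f x\<bar> * \<bar>g x\<bar>) \<le> (f x)^2 + (g x)^2"
      using sum_squares_bound[of "\<bar>f x\<bar>" "\<bar>g x\<bar>"] by (simp add: mult.assoc)
    moreover have "0 \<le> \<bar>f x\<bar> * \<bar>g x\<bar>" by simp
    ultimately have "\<bar>f x * g x\<bar> \<le> (f x)^2 + (g x)^2" unfolding abs_mult by linarith
    then have "\<bar>f x * g x\<bar> * rho x \<le> ((f x)^2 + (g x)^2) * rho x"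
      using rho(2)[of x] by (rule mult_right_mono)
    moreover have "norm (f x * g x * rho x) = \<bar>f x * g x\<bar> * rho x"
      using rho(2)[of x] by (simp add: abs_mult)
    ultimately show "norm (f x * g x * rho x) \<le> (f x)^2 * rho x + (g x)^2 * rho x"
      by (simp add: distrib_right)
  qed
qed

lemma tint_Cauchy_Schwarz:
  assumes f: "inL2 rho f" and g: "continuous_on UNIV g"
    and rho: "continuous_on UNIV rho" "\<And>x. 0 \<le> rho x"
  shows "\<bar>tint (\<lambda>x. f x * g x * rho x)\<bar> \<le> l2norm rho f * l2norm rho g"
proof -
  define A where "A = tint (\<lambda>x. (f x)^2 * rho x)"
  define B where "B = tint (\<lambda>x. (g x)^2 * rho x)"
  define I where "I = tint (\<lambda>x. f x * g x * rho x)"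
  have "0 \<le> s^2 * A + 2 * s * I + B" for s
  proof -
    have expand: "(\<lambda>x. (s * f x + g x)^2 * rho x)
        = (\<lambda>x. (s^2 * ((f x)^2 * rho x) + (2 * s) * (f x * g x * rho x)) + (g x)^2 * rho x)"
      by (simp add: fun_eq_iff power2_eq_square algebra_simps)
    have "(\<lambda>x. s^2 * ((f x)^2 * rho x)) integrable_on {0..2*pi}"
      using f integrable_cmul[of "\<lambda>x. (f x)^2 * rho x" _ "s^2"] by (simp add: inL2_def)
    moreover have "(\<lambda>x. (2 * s) * (f x * g x * rho x)) integrable_on {0..2*pi}"
      using integrable_cmul[OF L2_mult_continuous_integrable[OF f g rho], of "2 * s"] by simp
    moreover have "(\<lambda>x. (g x)^2 * rho x) integrable_on {0..2*pi}"
      by (intro integrable_on_period continuous_intros g rho(1))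
    ultimately have "tint (\<lambda>x. (s * f x + g x)^2 * rho x) = s^2 * A + 2 * s * I + B"
      unfolding expand A_def B_def I_def by (simp add: tint_add integrable_add tint_cmult)
    moreover have "0 \<le> tint (\<lambda>x. (s * f x + g x)^2 * rho x)"
      by (rule tint_nonneg) (simp add: rho(2))
    ultimately show ?thesis by simp
  qed
  moreover have "0 \<le> A" unfolding A_def by (rule tint_nonneg) (simp add: rho(2))
  ultimately have "I^2 \<le> A * B" by (rule discriminant_le_if_quadratic_nonneg[rotated])
  then have "sqrt (I^2) \<le> sqrt (A * B)" by (rule real_sqrt_le_mono)
  then show ?thesis by (simp add: l2norm_def A_def B_def I_def real_sqrt_mult)
qed

lemma l2norm_le_if_dominated:
  assumes "continuous_on UNIV F" "continuous_on UNIV G"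
    and rho: "continuous_on UNIV rho" "\<And>x. 0 \<le> rho x"
    and "0 \<le> c" and dominated: "\<And>x. \<bar>F x\<bar> \<le> c * G x"
  shows "l2norm rho F \<le> c * l2norm rho G"
proof -
  have "tint (\<lambda>x. (F x)^2 * rho x) \<le> tint (\<lambda>x. c^2 * ((G x)^2 * rho x))"
  proof (rule tint_mono)
    show "(\<lambda>x. (F x)^2 * rho x) integrable_on {0..2*pi}"
      and "(\<lambda>x. c^2 * ((G x)^2 * rho x)) integrable_on {0..2*pi}"
      by (intro integrable_on_period continuous_intros assms)+
    fix x
    have "\<bar>F x\<bar>^2 \<le> (c * G x)^2" by (rule power_mono[OF dominated]) simp
    then have "(F x)^2 * rho x \<le> (c * G x)^2 * rho x"
      using rho(2) by (simp add: mult_right_mono)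
    then show "(F x)^2 * rho x \<le> c^2 * ((G x)^2 * rho x)"
      by (simp add: power_mult_distrib mult.assoc)
  qed
  then have "l2norm rho F \<le> sqrt (c^2 * tint (\<lambda>x. (G x)^2 * rho x))"
    unfolding l2norm_def tint_cmult by (rule real_sqrt_le_mono)
  then show ?thesis using \<open>0 \<le> c\<close> by (simp add: real_sqrt_mult l2norm_def)
qed

lemma abs_tint_mult_density_le:
  assumes "continuous_on UNIV h" "continuous_on UNIV w"
    and w: "\<And>x. 0 \<le> w x" "tint w = 1" and h: "\<And>x. \<bar>h x\<bar> \<le> L"
  shows "\<bar>tint (\<lambda>x. h x * w x)\<bar> \<le> L"
proof -
  have integrable: "(\<lambda>x. c * w x) integrable_on {0..2*pi}"
      "(\<lambda>x. h x * w x) integrable_on {0..2*pi}" for c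
    by (intro integrable_on_period continuous_intros assms)+
  have "- L \<le> h x" "h x \<le> L" for x
    using h[of x] by auto
  then have "tint (\<lambda>x. h x * w x) \<le> tint (\<lambda>x. L * w x)"
    and "tint (\<lambda>x. (- L) * w x) \<le> tint (\<lambda>x. h x * w x)"
    using w(1) by (intro tint_mono integrable mult_right_mono; simp)+
  then show ?thesis unfolding tint_cmult w(2) by simp
qed

section \<open>Periodic and smooth functions\<close>

lemma per_deriv: "per g \<Longrightarrow> per (deriv g)"
  unfolding per_def
proof
  fix x
  assume "\<forall>x. g (x + 2*pi) = g x"
  then have "(\<lambda>x. g (x + 2*pi)) = g" by (simp add: fun_eq_iff)
  then have "(g has_field_derivative D) (at (x + 2*pi)) \<longleftrightarrow> (g has_field_derivative D) (at x)" for D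
    using DERIV_shift[of g D x "2*pi"] by simp
  then show "deriv g (x + 2*pi) = deriv g x" unfolding deriv_def by simp
qed

lemma per_mult: "per g \<Longrightarrow> per h \<Longrightarrow> per (\<lambda>x. g x * h x)"
  by (simp add: per_def)

lemma per_divide: "per g \<Longrightarrow> per h \<Longrightarrow> per (\<lambda>x. g x / h x)"
  by (simp add: per_def)

lemma per_funpow_deriv: "per g \<Longrightarrow> per ((deriv ^^ n) g)"
  by (induction n) (simp_all add: per_deriv)

lemma per_shift_int:
  assumes "per g"
  shows "g (x + of_int k * (2*pi)) = g x"
proof (induction k rule: int_induct[where k=0])
  case (step1 i)
  then show ?case using assms[unfolded per_def, rule_format, of "x + of_int i * (2*pi)"]
    by (simp add: algebra_simps)
next
  case (step2 i)
  then show ?case using assms[unfolded per_def, rule_format, of "x + of_int (i - 1) * (2*pi)"]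
    by (simp add: algebra_simps)
qed simp

lemma per_value_in_period:
  assumes "per g"
  obtains y where "y \<in> {0..2*pi}" "g x = g y"
proof
  define k where "k = \<lfloor>x / (2*pi)\<rfloor>"
  have "of_int k \<le> x / (2*pi)" "x / (2*pi) < of_int k + 1"
    unfolding k_def by linarith+
  then show "x - of_int k * (2*pi) \<in> {0..2*pi}"
    by (auto simp: field_simps)
  show "g x = g (x - of_int k * (2*pi))"
    using per_shift_int[OF assms, of "x - of_int k * (2*pi)" k] by simp
qed

lemma bounded_if_periodic_continuous:
  assumes T: "compact T"
    and cont: "continuous_on (T \<times> UNIV) (\<lambda>(t, x). F t x)"
    and per: "\<And>t. t \<in> T \<Longrightarrow> per (F t)"
  obtains B where "\<And>t x. t \<in> T \<Longrightarrow> \<bar>F t x\<bar> \<le> B"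
proof -
  have "compact ((\<lambda>(t, x). F t x) ` (T \<times> {0..2*pi}))"
    by (rule compact_continuous_image[OF continuous_on_subset[OF cont]])
      (auto intro: compact_Times T)
  then obtain B where B: "\<And>t y. t \<in> T \<Longrightarrow> y \<in> {0..2*pi} \<Longrightarrow> \<bar>F t y\<bar> \<le> B"
    by (fastforce dest!: compact_imp_bounded simp: bounded_iff)
  show ?thesis
  proof
    fix t x assume "t \<in> T"
    moreover obtain y where "y \<in> {0..2*pi}" "F t x = F t y"
      using per_value_in_period[OF per[OF \<open>t \<in> T\<close>]] .
    ultimately show "\<bar>F t x\<bar> \<le> B" using B by simp
  qed
qed

lemma abs_le_supn:
  assumes "\<And>x. \<bar>g x\<bar> \<le> B"
  shows "\<bar>g x\<bar> \<le> supn g"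
  unfolding supn_def by (rule cSUP_upper) (auto intro: bdd_aboveI2 assms)

lemma supn_nonneg:
  assumes "\<And>x. \<bar>g x\<bar> \<le> B"
  shows "0 \<le> supn g"
proof -
  have "\<bar>g 0\<bar> \<le> supn g" by (rule abs_le_supn[OF assms])
  then show ?thesis by linarith
qed

lemma supn_le:
  assumes "\<And>x. \<bar>g x\<bar> \<le> B"
  shows "supn g \<le> B"
  unfolding supn_def by (rule cSUP_least) (auto intro: assms)

lemma supn_le_SUP:
  assumes "s \<in> S" and bound: "\<And>s x. s \<in> S \<Longrightarrow> \<bar>F s x\<bar> \<le> B"
  shows "supn (F s) \<le> (SUP s\<in>S. supn (F s))"
    and "(supn (F s))^2 \<le> (SUP s\<in>S. (supn (F s))^2)"
proof -
  have "supn (F s) \<le> B" and "0 \<le> supn (F s)" if "s \<in> S" for s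
    using supn_le supn_nonneg bound[OF that] by blast+
  then have "bdd_above ((\<lambda>s. supn (F s)) ` S)" and "bdd_above ((\<lambda>s. (supn (F s))^2) ` S)"
    by (auto intro!: bdd_aboveI2 power_mono)
  then show "supn (F s) \<le> (SUP s\<in>S. supn (F s))"
    and "(supn (F s))^2 \<le> (SUP s\<in>S. (supn (F s))^2)"
    using \<open>s \<in> S\<close> by (auto intro: cSUP_upper)
qed

lemma smooth_fun_deriv: "smooth_fun g \<Longrightarrow> smooth_fun (deriv g)"
  unfolding smooth_fun_def by (metis funpow_Suc_right o_apply)

lemma smooth_fun_differentiable: "smooth_fun g \<Longrightarrow> g differentiable (at x)"
  unfolding smooth_fun_def by (metis funpow_0)

lemma smooth_fun_continuous: "smooth_fun g \<Longrightarrow> continuous_on UNIV g"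
  by (metis differentiable_imp_continuous_on differentiable_on_def smooth_fun_differentiable)

lemma deriv_deriv2_mult_deriv:
  assumes "smooth_fun g"
  shows "deriv (\<lambda>y. deriv (deriv g) y * deriv g y)
    = (\<lambda>x. deriv (deriv (deriv g)) x * deriv g x + (deriv (deriv g) x)^2)"
proof
  fix x
  have "((\<lambda>y. deriv (deriv g) y * deriv g y) has_real_derivative
      deriv (deriv (deriv g)) x * deriv g x + (deriv (deriv g) x)^2) (at x)"
    using smooth_fun_differentiable[OF smooth_fun_deriv[OF assms], of x]
      smooth_fun_differentiable[OF smooth_fun_deriv[OF smooth_fun_deriv[OF assms]], of x]
    by (auto intro!: derivative_eq_intros simp: DERIV_deriv_iff_real_differentiable[symmetric]
        power2_eq_square)
  then show "deriv (\<lambda>y. deriv (deriv g) y * deriv g y) x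
      = deriv (deriv (deriv g)) x * deriv g x + (deriv (deriv g) x)^2"
    by (rule DERIV_imp_deriv)
qed

lemma continuous_d2: "smooth_fun (phi t) \<Longrightarrow> continuous_on UNIV (d2 phi t)"
  unfolding d2_def by (intro smooth_fun_continuous smooth_fun_deriv)

lemma per_d2: "per (phi t) \<Longrightarrow> per (d2 phi t)"
  unfolding d2_def by (intro per_deriv)

lemma continuous_deriv_d2_mult_d1:
  assumes "smooth_fun (phi t)"
  shows "continuous_on UNIV (deriv (\<lambda>y. d2 phi t y * d1 phi t y))"
  unfolding d1_def d2_def deriv_deriv2_mult_deriv[OF assms]
  by (intro continuous_intros smooth_fun_continuous smooth_fun_deriv assms)

lemma per_deriv_d2_mult_d1: "per (phi t) \<Longrightarrow> per (deriv (\<lambda>y. d2 phi t y * d1 phi t y))"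
  unfolding d1_def d2_def by (intro per_deriv per_mult)

lemma bounded_d2:
  assumes T: "compact T" and per: "\<And>t. t \<in> T \<Longrightarrow> per (phi t)"
    and cont: "\<And>n. continuous_on (T \<times> UNIV) (\<lambda>(t, x). (deriv ^^ n) (phi t) x)"
  obtains A where "\<And>t x. t \<in> T \<Longrightarrow> \<bar>d2 phi t x\<bar> \<le> A"
  using bounded_if_periodic_continuous[OF T cont[of 2] per_funpow_deriv[OF per]]
  by (auto simp: d2_def numeral_2_eq_2)

lemma bounded_deriv_d2_mult_d1:
  assumes T: "compact T" and per: "\<And>t. t \<in> T \<Longrightarrow> per (phi t)"
    and smooth: "\<And>t. t \<in> T \<Longrightarrow> smooth_fun (phi t)"
    and cont: "\<And>n. continuous_on (T \<times> UNIV) (\<lambda>(t, x). (deriv ^^ n) (phi t) x)"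
  obtains B where "\<And>t x. t \<in> T \<Longrightarrow> \<bar>deriv (\<lambda>y. d2 phi t y * d1 phi t y) x\<bar> \<le> B"
proof -
  have "continuous_on (T \<times> UNIV) (\<lambda>p. (\<lambda>(t, x). (deriv ^^ 3) (phi t) x) p
      * (\<lambda>(t, x). (deriv ^^ 1) (phi t) x) p + ((\<lambda>(t, x). (deriv ^^ 2) (phi t) x) p)^2)"
    by (intro continuous_intros cont)
  then have "continuous_on (T \<times> UNIV) (\<lambda>(t, x). deriv (\<lambda>y. d2 phi t y * d1 phi t y) x)"
    by (rule continuous_on_cong[THEN iffD1, rotated 2])
      (auto simp: d1_def d2_def deriv_deriv2_mult_deriv smooth numeral_3_eq_3 numeral_2_eq_2)
  moreover have "per (deriv (\<lambda>y. d2 phi t y * d1 phi t y))" if "t \<in> T" for t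
    by (rule per_deriv_d2_mult_d1[of phi t, OF per[OF that]])
  ultimately show ?thesis
    using bounded_if_periodic_continuous[OF T] that by blast
qed

section \<open>Densities transported by the flow\<close>

locale pushforward_density =
  fixes rho :: "real \<Rightarrow> real" and rhot X :: "real \<Rightarrow> real \<Rightarrow> real" and t :: real
  assumes rho_cont: "continuous_on UNIV rho" and rho_pos: "\<And>x. 0 < rho x"
    and rhot_cont: "continuous_on UNIV (rhot t)" and rhot_per: "per (rhot t)"
    and rhot_pos: "\<And>y. 0 < rhot t y"
    and X_cont: "continuous_on UNIV (X t)"
    and pushforward: "\<And>g. continuous_on UNIV g \<Longrightarrow> per g \<Longrightarrow>
      tint (\<lambda>y. g y * rhot t y) = tint (\<lambda>x. g (X t x) * rho x)"
begin

abbreviation K :: real where "K \<equiv> tint (\<lambda>y. 1 / rhot t y)"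

lemma rho_nonneg: "0 \<le> rho x"
  using rho_pos less_imp_le by blast

lemma inverse_rhot_cont: "continuous_on UNIV (\<lambda>y. 1 / rhot t y)"
  using rhot_pos by (intro continuous_intros rhot_cont) (simp add: less_imp_neq[symmetric])

lemma K_pos: "0 < K"
proof -
  obtain y0 where "\<forall>y\<in>{0..2*pi}. rhot t y \<le> rhot t y0"
    using continuous_attains_sup[of "{0..2*pi}" "rhot t"] continuous_on_subset[OF rhot_cont]
    by auto
  then have "tint (\<lambda>y. 1 / rhot t y0) \<le> K"
    using rhot_pos by (intro tint_mono integrable_on_period inverse_rhot_cont) (auto simp: frac_le)
  moreover have "0 < 1 / rhot t y0" using rhot_pos by simp
  ultimately show ?thesis using tint_const[of "1 / rhot t y0"] by linarith
qed

lemma rhohat_eq: "rhohat rhot t = (\<lambda>y. 1 / K * (1 / rhot t y))"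
  by (simp add: fun_eq_iff rhohat_def)

lemma tint_cmult_inverse_rhot: "tint (\<lambda>y. c * (1 / rhot t y)) = c * K"
  by (rule tint_cmult)

lemma rhohat_pos: "0 < rhohat rhot t y"
  using K_pos rhot_pos by (simp add: rhohat_eq)

lemma rhohat_cont: "continuous_on UNIV (rhohat rhot t)"
  unfolding rhohat_eq by (intro continuous_intros inverse_rhot_cont)

lemma tint_rhohat: "tint (rhohat rhot t) = 1"
  using K_pos unfolding rhohat_eq tint_cmult_inverse_rhot by simp

lemma l2norm_comp_X:
  assumes "continuous_on UNIV g" "per g"
  shows "l2norm rho (\<lambda>x. g (X t x)) = sqrt (tint (\<lambda>y. (g y)^2 * rhot t y))"
  unfolding l2norm_def using assms
  by (subst pushforward[where g="\<lambda>y. (g y)^2"]) (auto intro: continuous_intros simp: per_def)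

lemma rhohat_per: "per (rhohat rhot t)"
  using rhot_per by (simp add: per_def rhohat_eq)

lemma l2norm_rhohat_X: "l2norm rho (\<lambda>x. rhohat rhot t (X t x)) = 1 / sqrt K"
proof -
  have "(\<lambda>y. (rhohat rhot t y)^2 * rhot t y) = (\<lambda>y. 1 / K^2 * (1 / rhot t y))"
    using rhot_pos by (simp add: fun_eq_iff rhohat_eq power2_eq_square less_imp_neq[symmetric])
  then have "l2norm rho (\<lambda>x. rhohat rhot t (X t x)) = sqrt (1 / K^2 * K)"
    by (simp only: l2norm_comp_X[OF rhohat_cont rhohat_per] tint_cmult_inverse_rhot)
  also have "\<dots> = 1 / sqrt K"
    using K_pos by (simp add: power2_eq_square real_sqrt_divide)
  finally show ?thesis .
qed

lemma continuous_comp_X: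
  assumes "continuous_on UNIV g"
  shows "continuous_on UNIV (\<lambda>x. g (X t x))"
  by (rule continuous_on_compose2[OF assms X_cont]) simp

lemma l2norm_quotient_X_le:
  assumes h: "continuous_on UNIV h" "per h" and bound: "\<And>y. \<bar>h y\<bar> \<le> L"
  shows "l2norm rho (\<lambda>x. h (X t x) / rhot t (X t x)) \<le> L * sqrt K"
proof -
  have cont: "continuous_on UNIV (\<lambda>y. h y / rhot t y)"
    using rhot_pos by (intro continuous_intros h rhot_cont) (simp add: less_imp_neq[symmetric])
  have "l2norm rho (\<lambda>x. h (X t x) / rhot t (X t x)) = sqrt (tint (\<lambda>y. (h y / rhot t y)^2 * rhot t y))"
    by (rule l2norm_comp_X[OF cont per_divide[OF h(2) rhot_per]])
  also have "\<dots> \<le> sqrt (tint (\<lambda>y. L^2 * (1 / rhot t y)))"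
  proof (intro real_sqrt_le_mono tint_mono)
    show "(\<lambda>y. (h y / rhot t y)^2 * rhot t y) integrable_on {0..2*pi}"
      and "(\<lambda>y. L^2 * (1 / rhot t y)) integrable_on {0..2*pi}"
      by (intro integrable_on_period continuous_intros cont rhot_cont inverse_rhot_cont)+
    fix y
    have "(h y)^2 \<le> L^2" using power_mono[OF bound abs_ge_zero, of y 2] by simp
    then show "(h y / rhot t y)^2 * rhot t y \<le> L^2 * (1 / rhot t y)"
      using rhot_pos[of y] by (simp add: power2_eq_square divide_right_mono)
  qed
  also have "\<dots> = L * sqrt K"
    using bound[of 0] unfolding tint_cmult_inverse_rhot by (simp add: real_sqrt_mult)
  finally show ?thesis .
qed

lemma abs_tint_quotient_X_le:
  assumes f: "inL2 rho f" and h: "continuous_on UNIV h" "per h" "\<And>y. \<bar>h y\<bar> \<le> L"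
  shows "\<bar>tint (\<lambda>y. f y * (h (X t y) / rhot t (X t y)) * rho y)\<bar> \<le> L * sqrt K * l2norm rho f"
proof -
  have "continuous_on UNIV (\<lambda>x. h (X t x) / rhot t (X t x))"
    using rhot_pos
    by (intro continuous_intros continuous_comp_X h rhot_cont) (simp add: less_imp_neq[symmetric])
  then have "\<bar>tint (\<lambda>y. f y * (h (X t y) / rhot t (X t y)) * rho y)\<bar>
      \<le> l2norm rho f * l2norm rho (\<lambda>x. h (X t x) / rhot t (X t x))"
    using tint_Cauchy_Schwarz f rho_cont rho_nonneg by blast
  also have "\<dots> \<le> l2norm rho f * (L * sqrt K)"
    by (intro mult_left_mono l2norm_quotient_X_le h l2norm_nonneg rho_nonneg)
  finally show ?thesis by (simp add: mult_ac)
qed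

lemma l2norm_Lam_le:
  assumes f: "inL2 rho f"
    and d2: "continuous_on UNIV (d2 phi t)" "per (d2 phi t)" "\<And>x. \<bar>d2 phi t x\<bar> \<le> M"
  shows "l2norm rho (Lam phi X rho rhot t f) \<le> M * l2norm rho f"
proof -
  define c where "c = tint (\<lambda>y. f y * acoef phi X rhot t y * rho y)"
  have c: "\<bar>c\<bar> \<le> M * sqrt K * l2norm rho f"
    unfolding c_def acoef_def by (rule abs_tint_quotient_X_le[OF f d2])
  have "l2norm rho (Lam phi X rho rhot t f) \<le> \<bar>c\<bar> * l2norm rho (\<lambda>x. rhohat rhot t (X t x))"
  proof (rule l2norm_le_if_dominated)
    show "continuous_on UNIV (Lam phi X rho rhot t f)"
      unfolding Lam_def c_def[symmetric] by (intro continuous_intros continuous_comp_X rhohat_cont)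
  qed (auto simp: Lam_def c_def[symmetric] abs_mult less_imp_le[OF rhohat_pos]
      rho_cont rho_nonneg continuous_comp_X rhohat_cont)
  also have "\<dots> = \<bar>c\<bar> / sqrt K" by (simp add: l2norm_rhohat_X)
  also have "\<dots> \<le> M * l2norm rho f"
    using c K_pos by (simp add: divide_le_eq mult_ac)
  finally show ?thesis .
qed

lemma l2norm_Theta_le:
  assumes f: "inL2 rho f"
    and d2: "continuous_on UNIV (d2 phi t)" "per (d2 phi t)" "\<And>x. \<bar>d2 phi t x\<bar> \<le> M"
    and b: "continuous_on UNIV (deriv (\<lambda>y. d2 phi t y * d1 phi t y))"
      "per (deriv (\<lambda>y. d2 phi t y * d1 phi t y))"
      "\<And>x. \<bar>deriv (\<lambda>y. d2 phi t y * d1 phi t y) x\<bar> \<le> N"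
  shows "l2norm rho (Theta phi X rho rhot t f) \<le> (2 * M^2 + N / 2) * l2norm rho f"
proof -
  define c where "c = tint (\<lambda>y. f y * acoef phi X rhot t y * rho y)"
  define e where "e = tint (\<lambda>y. f y * bcoef phi X rhot t y * rho y)"
  define D where "D = tint (\<lambda>y. d2 phi t y * rhohat rhot t y)"
  have c: "\<bar>c\<bar> \<le> M * sqrt K * l2norm rho f"
    unfolding c_def acoef_def by (rule abs_tint_quotient_X_le[OF f d2])
  have e: "\<bar>e\<bar> \<le> N * sqrt K * l2norm rho f"
    unfolding e_def bcoef_def by (rule abs_tint_quotient_X_le[OF f b])
  have D: "\<bar>D\<bar> \<le> M"
    unfolding D_def using rhohat_pos
    by (intro abs_tint_mult_density_le d2(1,3) rhohat_cont tint_rhohat less_imp_le)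
  have M: "0 \<le> M" using d2(3)[of 0] by linarith
  have Theta_eq: "Theta phi X rho rhot t f
      = (\<lambda>x. (- c / 2 * d2 phi t (X t x) - e / 2 + 3 / 2 * c * D) * rhohat rhot t (X t x))"
    by (simp add: fun_eq_iff Theta_def c_def e_def D_def algebra_simps)
  have pointwise: "\<bar>- c / 2 * d2 phi t (X t x) - e / 2 + 3 / 2 * c * D\<bar> \<le> 2 * \<bar>c\<bar> * M + \<bar>e\<bar> / 2"
    for x
  proof -
    have "\<bar>c * d2 phi t (X t x)\<bar> \<le> \<bar>c\<bar> * M" and "\<bar>c * D\<bar> \<le> \<bar>c\<bar> * M"
      using d2(3) D by (simp_all add: abs_mult mult_left_mono)
    then show ?thesis by (simp add: abs_le_iff) linarith
  qed
  have "l2norm rho (Theta phi X rho rhot t f)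
      \<le> (2 * \<bar>c\<bar> * M + \<bar>e\<bar> / 2) * l2norm rho (\<lambda>x. rhohat rhot t (X t x))"
    unfolding Theta_eq
  proof (rule l2norm_le_if_dominated)
    fix x
    show "\<bar>(- c / 2 * d2 phi t (X t x) - e / 2 + 3 / 2 * c * D) * rhohat rhot t (X t x)\<bar>
        \<le> (2 * \<bar>c\<bar> * M + \<bar>e\<bar> / 2) * rhohat rhot t (X t x)"
      using pointwise[of x] rhohat_pos[of "X t x"] by (simp add: abs_mult mult_right_mono)
  qed (use M in \<open>auto intro!: continuous_intros continuous_comp_X rhohat_cont d2(1)
      simp: rho_cont rho_nonneg\<close>)
  also have "\<dots> = (2 * \<bar>c\<bar> * M + \<bar>e\<bar> / 2) / sqrt K" by (simp add: l2norm_rhohat_X)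
  also have "\<dots> \<le> (2 * M^2 + N / 2) * l2norm rho f"
  proof -
    have "2 * \<bar>c\<bar> * M + \<bar>e\<bar> / 2 \<le> 2 * (M * sqrt K * l2norm rho f) * M + N * sqrt K * l2norm rho f / 2"
      using c e M by (intro add_mono mult_right_mono) auto
    then show ?thesis
      using K_pos by (simp add: divide_le_eq power2_eq_square algebra_simps)
  qed
  finally show ?thesis .
qed

end

theorem lemma4p4:
  fixes phi :: "real \<Rightarrow> real \<Rightarrow> real"
    and X :: "real \<Rightarrow> real \<Rightarrow> real"
    and rho :: "real \<Rightarrow> real"
    and rhot :: "real \<Rightarrow> real \<Rightarrow> real"
  assumes phi_per: "\<And>t. t \<in> {0..1} \<Longrightarrow> per (phi t)"
    and phi_smooth: "\<And>t. t \<in> {0..1} \<Longrightarrow> smooth_fun (phi t)"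
    and phi_cont: "\<And>n. continuous_on ({0..1} \<times> UNIV) (\<lambda>(t, x). (deriv ^^ n) (phi t) x)"
    and rho_per: "per rho" and rho_smooth: "smooth_fun rho"
    and rho_pos: "\<And>x. rho x > 0" and rho_prob: "tint rho = 1"
    and X0: "X 0 = id"
    and X_lift: "\<And>t x. t \<in> {0..1} \<Longrightarrow> X t (x + 2*pi) = X t x + 2*pi"
    and X_C1: "\<And>t. t \<in> {0..1} \<Longrightarrow> continuous_on UNIV (deriv (X t))
                 \<and> (\<forall>x. X t differentiable (at x))"
    and X_deriv_pos: "\<And>t x. t \<in> {0..1} \<Longrightarrow> deriv (X t) x > 0"
    and rhot_per: "\<And>t. t \<in> {0..1} \<Longrightarrow> per (rhot t)"
    and rhot_cont: "\<And>t. t \<in> {0..1} \<Longrightarrow> continuous_on UNIV (rhot t)"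
    and rhot_pos: "\<And>t x. t \<in> {0..1} \<Longrightarrow> rhot t x > 0"
    and pushforward: "\<And>t g. t \<in> {0..1} \<Longrightarrow> continuous_on UNIV g \<Longrightarrow> per g \<Longrightarrow>
           tint (\<lambda>y. g y * rhot t y) = tint (\<lambda>x. g (X t x) * rho x)"
  shows "\<forall>t\<in>{0..1}. \<forall>f. inL2 rho f \<longrightarrow>
      l2norm rho (Lam phi X rho rhot t f)
        \<le> (SUP s\<in>{0..1}. supn (d2 phi s)) * l2norm rho f
    \<and> l2norm rho (Theta phi X rho rhot t f)
        \<le> (2 * (SUP s\<in>{0..1}. (supn (d2 phi s))^2)
            + (SUP s\<in>{0..1}. supn (\<lambda>x. deriv (\<lambda>y. d2 phi s y * d1 phi s y) x)))
          * l2norm rho f"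
proof (intro ballI allI impI conjI)
  fix t :: real and f :: "real \<Rightarrow> real"
  assume t: "t \<in> {0..1}" and f: "inL2 rho f"
  interpret pushforward_density rho rhot X t
    using rho_pos rhot_per[OF t] rhot_cont[OF t] rhot_pos[OF t] pushforward[OF t]
      smooth_fun_continuous[OF rho_smooth] X_C1[OF t]
    by unfold_locales (auto intro: differentiable_imp_continuous_on simp: differentiable_on_def)
  obtain A where A: "\<And>s x. s \<in> {0..1} \<Longrightarrow> \<bar>d2 phi s x\<bar> \<le> A"
    using bounded_d2[OF compact_Icc phi_per phi_cont] by blast
  obtain B where B: "\<And>s x. s \<in> {0..1} \<Longrightarrow> \<bar>deriv (\<lambda>y. d2 phi s y * d1 phi s y) x\<bar> \<le> B"
    using bounded_deriv_d2_mult_d1[OF compact_Icc phi_per phi_smooth phi_cont] by blast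
  let ?b = "\<lambda>s. deriv (\<lambda>y. d2 phi s y * d1 phi s y)"
  have Lam: "l2norm rho (Lam phi X rho rhot t f) \<le> supn (d2 phi t) * l2norm rho f"
    and Theta: "l2norm rho (Theta phi X rho rhot t f)
      \<le> (2 * (supn (d2 phi t))^2 + supn (?b t) / 2) * l2norm rho f"
    using A[OF t] B[OF t] phi_smooth[OF t] phi_per[OF t]
    by (intro l2norm_Lam_le l2norm_Theta_le f continuous_d2 per_d2 abs_le_supn
        continuous_deriv_d2_mult_d1 per_deriv_d2_mult_d1; blast)+
  have nf: "0 \<le> l2norm rho f" by (rule l2norm_nonneg[OF rho_nonneg])
  have "supn (d2 phi t) \<le> (SUP s\<in>{0..1}. supn (d2 phi s))"
    by (rule supn_le_SUP(1)[where F="d2 phi", OF t A])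
  with Lam nf show "l2norm rho (Lam phi X rho rhot t f)
      \<le> (SUP s\<in>{0..1}. supn (d2 phi s)) * l2norm rho f"
    by (meson mult_right_mono order_trans)
  have "(supn (d2 phi t))^2 \<le> (SUP s\<in>{0..1}. (supn (d2 phi s))^2)"
    by (rule supn_le_SUP(2)[where F="d2 phi", OF t A])
  moreover have "supn (?b t) / 2 \<le> (SUP s\<in>{0..1}. supn (?b s))"
    using supn_le_SUP(1)[where F="?b", OF t B] supn_nonneg[where g="?b t", OF B[OF t]] by simp
  ultimately have "2 * (supn (d2 phi t))^2 + supn (?b t) / 2
      \<le> 2 * (SUP s\<in>{0..1}. (supn (d2 phi s))^2) + (SUP s\<in>{0..1}. supn (?b s))"
    by linarith
  with Theta nf show "l2norm rho (Theta phi X rho rhot t f)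
      \<le> (2 * (SUP s\<in>{0..1}. (supn (d2 phi s))^2)
          + (SUP s\<in>{0..1}. supn (\<lambda>x. deriv (\<lambda>y. d2 phi s y * d1 phi s y) x))) * l2norm rho f"
    by (meson mult_right_mono order_trans)
qed

end
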